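(* Let $M\in\mathbb C\setminus\{0\}$ and $y\in\mathbb C$, and set $\rho(a)=\begin{bmatrix} M&1\\0&M^{-1}\end{bmatrix}$, $\rho(b)=\begin{bmatrix} M&0\\2-y&M^{-1}\end{bmatrix}$, extended multiplicatively to words in $a^{\pm1},b^{\pm1}$. Let $I$ be the $2\times2$ identity matrix. (1) If $m\ge1$ and $w=(ba^{-1})^m(b^{-1}a)^m$, then $$\rho(w)=I-S_m(y)S_{m-1}(y)\begin{bmatrix} y-2& M-M^{-1}\\ (M-M^{-1})(2-y) & 2-y\end{bmatrix}+S_{m-1}^2(y)\begin{bmatrix} (y-2)(y-M^2) & -(M^{-1}y-M-M^{-1})\\ (y-2)(M^{-1}y-M-M^{-1}) & M^{-2}(2-y)\end{bmatrix}.$$ (2) If $m\ge0$ and $w=(ba^{-1})^m\,ba\,(b^{-1}a)^m$, then $$\rho(w)=I-S_m(y)S_{m-1}(y)\begin{bmatrix} 2M^2-y & M+M^{-1}\\ (M+M^{-1})(2-y) & 2M^{-2}-y\end{bmatrix}+S_m^2(y)\begin{bmatrix} M^2-1 & M\\ M(2-y) & -y+1+M^{-2}\end{bmatrix}+S_{m-1}^2(y)\begin{bmatrix} -y+1+M^2 & M^{-1}\\ M^{-1}(2-y) & M^{-2}-1\end{bmatrix}.$$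
   Context: $S_l(v)$, $l\in\mathbb Z$, are the Chebyshev polynomials of the second kind: $S_0(v)=1$, $S_1(v)=v$, and $S_l(v)=vS_{l-1}(v)-S_{l-2}(v)$ for all integers $l$ (so e.g. $S_{-1}=0$). *)

theory Defs
  imports "HOL-Analysis.Analysis"
begin

fun cheb_S_nat :: "nat \<Rightarrow> complex \<Rightarrow> complex" where
  "cheb_S_nat 0 v = 1"
| "cheb_S_nat (Suc 0) v = v"
| "cheb_S_nat (Suc (Suc n)) v = v * cheb_S_nat (Suc n) v - cheb_S_nat n v"

text \<open>Extension to all integers by the same recurrence:
  S_(-1) = 0 and S_(-k) = - S_(k-2) for k >= 2.\<close>
definition cheb_S :: "int \<Rightarrow> complex \<Rightarrow> complex" where
  "cheb_S l v = (if l \<ge> 0 then cheb_S_nat (nat l) v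
                 else if l = -1 then 0
                 else - cheb_S_nat (nat (- l - 2)) v)"

definition mat2 :: "complex \<Rightarrow> complex \<Rightarrow> complex \<Rightarrow> complex \<Rightarrow> complex^2^2" where
  "mat2 p q r s = (\<chi> i j. if i = 1 then (if j = 1 then p else q)
                              else (if j = 1 then r else s))"

definition csmult :: "complex \<Rightarrow> complex^2^2 \<Rightarrow> complex^2^2" where
  "csmult c A = (\<chi> i j. c * A $ i $ j)"

datatype letter = A | Ainv | B | Binv

definition rho_letter :: "complex \<Rightarrow> complex \<Rightarrow> letter \<Rightarrow> complex^2^2" where
  "rho_letter M y g = (case g of
      A \<Rightarrow> mat2 M 1 0 (inverse M)
    | Ainv \<Rightarrow> matrix_inv (mat2 M 1 0 (inverse M))
    | B \<Rightarrow> mat2 M 0 (2 - y) (inverse M)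
    | Binv \<Rightarrow> matrix_inv (mat2 M 0 (2 - y) (inverse M)))"

fun rho_word :: "complex \<Rightarrow> complex \<Rightarrow> letter list \<Rightarrow> complex^2^2" where
  "rho_word M y [] = mat 1"
| "rho_word M y (g # w) = rho_letter M y g ** rho_word M y w"

end

theory Submission
  imports Defs
begin

text \<open>Both words are built from powers of X = rho(b a^-1) and Y = rho(b^-1 a), two matrices of
  determinant 1 and trace y. By Cayley-Hamilton X + X^-1 = y I, so induction gives
  X^m = S_m(y) I - S_(m-1)(y) X^-1, and likewise for Y. Multiplying out, the formulas follow
  entrywise once S_m^2 - y S_m S_(m-1) + S_(m-1)^2 = 1 (the determinant of X^m) is used.\<close>

lemma matrix_inv_unique:
  fixes A B :: "'a::semiring_1^'n^'n"
  assumes "A ** B = mat 1" "B ** A = mat 1"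
  shows "matrix_inv A = B"
proof -
  let ?inverse = "\<lambda>A'. A ** A' = mat 1 \<and> A' ** A = mat 1"
  have "?inverse (matrix_inv A)"
    unfolding matrix_inv_def by (rule someI[of ?inverse B]) (use assms in auto)
  then have left_inverse: "matrix_inv A ** A = mat 1" by blast
  have "matrix_inv A = matrix_inv A ** (A ** B)" using assms by simp
  also have "\<dots> = B" by (simp add: matrix_mul_assoc left_inverse)
  finally show ?thesis .
qed

lemma mat2_mult:
  "mat2 p q r s ** mat2 p' q' r' s' =
     mat2 (p * p' + q * r') (p * q' + q * s') (r * p' + s * r') (r * q' + s * s')"
  by (simp add: mat2_def matrix_matrix_mult_def vec_eq_iff forall_2 sum_2)

lemma mat_1_eq_mat2: "mat 1 = mat2 1 0 0 1"
  by (simp add: mat2_def mat_def vec_eq_iff forall_2)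

lemma csmult_mat2: "csmult c (mat2 p q r s) = mat2 (c * p) (c * q) (c * r) (c * s)"
  by (simp add: mat2_def csmult_def vec_eq_iff forall_2)

lemma mat2_add: "mat2 p q r s + mat2 p' q' r' s' = mat2 (p + p') (q + q') (r + r') (s + s')"
  by (simp add: mat2_def vec_eq_iff forall_2)

lemma mat2_diff: "mat2 p q r s - mat2 p' q' r' s' = mat2 (p - p') (q - q') (r - r') (s - s')"
  by (simp add: mat2_def vec_eq_iff forall_2)

lemma mat2_eq_iff: "mat2 p q r s = mat2 p' q' r' s' \<longleftrightarrow> p = p' \<and> q = q' \<and> r = r' \<and> s = s'"
  by (auto simp: mat2_def vec_eq_iff forall_2)

lemma matrix_inv_mat2: "p * s - q * r = 1 \<Longrightarrow> matrix_inv (mat2 p q r s) = mat2 s (- q) (- r) p"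
  by (rule matrix_inv_unique) (simp_all add: mat2_mult mat_1_eq_mat2 mat2_eq_iff algebra_simps)

lemma rho_word_append: "rho_word M y (u @ v) = rho_word M y u ** rho_word M y v"
  by (induction u) (simp_all add: matrix_mul_assoc)

lemma cheb_S_succ: "cheb_S (int m + 1) v = v * cheb_S (int m) v - cheb_S (int m - 1) v"
proof (cases m)
  case 0
  then show ?thesis by (simp add: cheb_S_def)
next
  case (Suc k)
  then have "nat (int m + 1) = Suc (Suc k)" "nat (int m) = Suc k" "nat (int m - 1) = k" by auto
  with Suc show ?thesis by (simp add: cheb_S_def)
qed

lemma cheb_S_cassini:
  "(cheb_S (int m) v)^2 - v * cheb_S (int m) v * cheb_S (int m - 1) v + (cheb_S (int m - 1) v)^2 = 1"
proof (induction m)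
  case 0
  then show ?case by (simp add: cheb_S_def)
next
  case (Suc m)
  have "int (Suc m) - 1 = int m" "int (Suc m) = int m + 1" by auto
  with Suc show ?case by (simp only: cheb_S_succ) (simp add: power2_eq_square algebra_simps)
qed

lemma rho_word_replicate_det_1:
  assumes "rho_word M y u = mat2 p q r s" and "p * s - q * r = 1" and "p + s = t"
  shows "rho_word M y (concat (replicate m u)) =
    mat2 (cheb_S (int m) t - cheb_S (int m - 1) t * s) (cheb_S (int m - 1) t * q)
         (cheb_S (int m - 1) t * r) (cheb_S (int m) t - cheb_S (int m - 1) t * p)"
proof (induction m)
  case 0
  then show ?case by (simp add: cheb_S_def mat_1_eq_mat2)
next
  case (Suc m)
  have index_shift: "int (Suc m) = int m + 1" "int m + 1 - 1 = int m" by auto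
  show ?case
    unfolding index_shift cheb_S_succ replicate_Suc concat.simps rho_word_append Suc.IH assms(1)
      mat2_mult mat2_eq_iff
    by (intro conjI) (use assms(2,3) in algebra)+
qed

lemma rho_word_power_B_Ainv:
  assumes "M \<noteq> 0"
  shows "rho_word M y (concat (replicate m [B, Ainv])) =
    mat2 (cheb_S (int m) y - cheb_S (int m - 1) y * (y - 1)) (- cheb_S (int m - 1) y * M)
         (cheb_S (int m - 1) y * (2 - y) * inverse M) (cheb_S (int m) y - cheb_S (int m - 1) y)"
proof -
  have "rho_word M y [B, Ainv] = mat2 1 (- M) ((2 - y) * inverse M) (y - 1)"
    using assms by (simp add: rho_letter_def matrix_inv_mat2 mat2_mult mat2_eq_iff)
  from rho_word_replicate_det_1[OF this] show ?thesis
    using assms by (simp add: field_simps)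
qed

lemma rho_word_power_Binv_A:
  assumes "M \<noteq> 0"
  shows "rho_word M y (concat (replicate m [Binv, A])) =
    mat2 (cheb_S (int m) y - cheb_S (int m - 1) y * (y - 1)) (cheb_S (int m - 1) y * inverse M)
         (cheb_S (int m - 1) y * (y - 2) * M) (cheb_S (int m) y - cheb_S (int m - 1) y)"
proof -
  have "rho_word M y [Binv, A] = mat2 1 (inverse M) ((y - 2) * M) (y - 1)"
    using assms by (simp add: rho_letter_def matrix_inv_mat2 mat2_mult mat2_eq_iff algebra_simps)
  from rho_word_replicate_det_1[OF this] show ?thesis
    using assms by (simp add: field_simps)
qed

lemma rho_word_power_B_Ainv_power_Binv_A:
  assumes "M \<noteq> 0"
  shows "rho_word M y (concat (replicate m [B, Ainv]) @ concat (replicate m [Binv, A]))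
           = mat 1
             - csmult (cheb_S (int m) y * cheb_S (int m - 1) y)
                 (mat2 (y - 2) (M - inverse M) ((M - inverse M) * (2 - y)) (2 - y))
             + csmult ((cheb_S (int m - 1) y)^2)
                 (mat2 ((y - 2) * (y - M^2)) (- (inverse M * y - M - inverse M))
                       ((y - 2) * (inverse M * y - M - inverse M)) ((inverse M)^2 * (2 - y)))"
proof -
  txt \<open>With inverse M and the Chebyshev values abstracted to variables, every entry becomes a
    polynomial identity modulo M N = 1 and the Cassini relation, which is in reach of algebra.\<close>
  obtain N where N: "inverse M = N" by blast
  with assms have MN: "M * N = 1" by auto
  obtain s t where st: "cheb_S (int m) y = s" "cheb_S (int m - 1) y = t" by blast
  have cassini: "s^2 - y * s * t + t^2 = 1" using cheb_S_cassini[of m y] unfolding st .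
  show ?thesis
    unfolding rho_word_append rho_word_power_B_Ainv[OF assms] rho_word_power_Binv_A[OF assms] N st
      mat2_mult mat_1_eq_mat2 csmult_mat2 mat2_add mat2_diff mat2_eq_iff
    by (intro conjI) (use MN cassini in algebra)+
qed

lemma rho_word_power_B_Ainv_B_A_power_Binv_A:
  assumes "M \<noteq> 0"
  shows "rho_word M y (concat (replicate m [B, Ainv]) @ [B, A] @ concat (replicate m [Binv, A]))
           = mat 1
             - csmult (cheb_S (int m) y * cheb_S (int m - 1) y)
                 (mat2 (2 * M^2 - y) (M + inverse M) ((M + inverse M) * (2 - y)) (2 * (inverse M)^2 - y))
             + csmult ((cheb_S (int m) y)^2)
                 (mat2 (M^2 - 1) M (M * (2 - y)) (- y + 1 + (inverse M)^2))
             + csmult ((cheb_S (int m - 1) y)^2)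
                 (mat2 (- y + 1 + M^2) (inverse M) (inverse M * (2 - y)) ((inverse M)^2 - 1))"
proof -
  have B_A: "rho_word M y [B, A] = mat2 (M^2) M ((2 - y) * M) (2 - y + (inverse M)^2)"
    by (simp add: rho_letter_def mat2_mult mat2_eq_iff power2_eq_square mat_1_eq_mat2)
  obtain N where N: "inverse M = N" by blast
  with assms have MN: "M * N = 1" by auto
  obtain s t where st: "cheb_S (int m) y = s" "cheb_S (int m - 1) y = t" by blast
  have cassini: "s^2 - y * s * t + t^2 = 1" using cheb_S_cassini[of m y] unfolding st .
  show ?thesis
    unfolding rho_word_append B_A rho_word_power_B_Ainv[OF assms] rho_word_power_Binv_A[OF assms] N st
      mat2_mult mat_1_eq_mat2 csmult_mat2 mat2_add mat2_diff mat2_eq_iff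
    by (intro conjI) (use MN cassini in algebra)+
qed

theorem proposition3p3:
  fixes M y :: complex
  assumes "M \<noteq> 0"
  shows "(\<forall>m::nat. m \<ge> 1 \<longrightarrow>
           rho_word M y (concat (replicate m [B, Ainv]) @ concat (replicate m [Binv, A]))
           = mat 1
             - csmult (cheb_S (int m) y * cheb_S (int m - 1) y)
                 (mat2 (y - 2) (M - inverse M) ((M - inverse M) * (2 - y)) (2 - y))
             + csmult ((cheb_S (int m - 1) y)^2)
                 (mat2 ((y - 2) * (y - M^2)) (- (inverse M * y - M - inverse M))
                       ((y - 2) * (inverse M * y - M - inverse M)) ((inverse M)^2 * (2 - y)))) \<and>
         (\<forall>m::nat.
           rho_word M y (concat (replicate m [B, Ainv]) @ [B, A] @ concat (replicate m [Binv, A]))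
           = mat 1
             - csmult (cheb_S (int m) y * cheb_S (int m - 1) y)
                 (mat2 (2 * M^2 - y) (M + inverse M) ((M + inverse M) * (2 - y)) (2 * (inverse M)^2 - y))
             + csmult ((cheb_S (int m) y)^2)
                 (mat2 (M^2 - 1) M (M * (2 - y)) (- y + 1 + (inverse M)^2))
             + csmult ((cheb_S (int m - 1) y)^2)
                 (mat2 (- y + 1 + M^2) (inverse M) (inverse M * (2 - y)) ((inverse M)^2 - 1)))"
  using rho_word_power_B_Ainv_power_Binv_A[OF assms] rho_word_power_B_Ainv_B_A_power_Binv_A[OF assms]
  by blast

end
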